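(* Let $\Delta$ be a CNF whose primal treewidth is $w$, and let $\Sigma$ be a CNF obtained by applying the BVA transformation $k$ times successively starting from $\Delta$. Then the primal treewidth of $\Sigma$ is at most $w+k$.
   Context: BVA transformation: given a CNF $\Delta$ and a fresh variable $Y$ not occurring in $\Delta$, choose a set $C_Y = \{Y \vee \alpha_1,\ldots, Y\vee \alpha_m\}$ of clauses containing literal $Y$ and a set $C_{\neg Y} = \{\neg Y \vee \beta_1,\ldots,\neg Y\vee\beta_k\}$ of clauses containing $\neg Y$ (with $\alpha_i,\beta_j$ clauses over variables of $\Delta$) such that the set of resolvents $C_Y \bowtie C_{\neg Y} = \{\alpha_i \vee \beta_j\}$ is contained in the clauses of $\Delta$ and $|C_Y \bowtie C_{\neg Y}| > |C_Y| + |C_{\neg Y}|$; the result is $\Delta$ with the clauses $C_Y \bowtie C_{\neg Y}$ removed and the clauses $C_Y \cup C_{\neg Y}$ added. Primal treewidth: a jointree for a CNF $\Delta$ is a tree whose vertices are labeled with subsets (clusters) of the variables of $\Delta$ such that (i) for each clause of $\Delta$ some cluster contains all its variables, and (ii) if a variable appears in the clusters of two vertices then it appears in every cluster on the path between them. The width of a jointree is its largest cluster size minus 1; the primal treewidth of $\Delta$ is the minimum width of a jointree for $\Delta$ (equivalently, the treewidth of the primal graph, whose vertices are the variables with an edge between two variables iff they occur together in some clause). *)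

theory Defs
  imports Main
begin

text \<open>Literals are pairs (variable, polarity); True = positive literal.
  A clause is a finite set of literals, a CNF is a finite set of clauses.\<close>

type_synonym 'v lit = "'v \<times> bool"
type_synonym 'v clause = "'v lit set"
type_synonym 'v cnf = "'v clause set"

definition cnf :: "'v cnf \<Rightarrow> bool" where
  "cnf \<Delta> \<longleftrightarrow> finite \<Delta> \<and> (\<forall>C\<in>\<Delta>. finite C)"

definition clause_vars :: "'v clause \<Rightarrow> 'v set" where
  "clause_vars C = fst ` C"

definition vars :: "'v cnf \<Rightarrow> 'v set" where
  "vars \<Delta> = (\<Union>C\<in>\<Delta>. clause_vars C)"

text \<open>Resolvent set of C_Y and C_{not Y}, given by their residual parts A = {alpha_i}, B = {beta_j}.\<close>
definition resolvents :: "'v clause set \<Rightarrow> 'v clause set \<Rightarrow> 'v cnf" where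
  "resolvents A B = {\<alpha> \<union> \<beta> | \<alpha> \<beta>. \<alpha> \<in> A \<and> \<beta> \<in> B}"

definition bva_step :: "'v cnf \<Rightarrow> 'v cnf \<Rightarrow> bool" where
  "bva_step \<Delta> \<Sigma> \<longleftrightarrow>
     (\<exists>Y A B.
        Y \<notin> vars \<Delta> \<and> finite A \<and> finite B \<and>
        (\<forall>\<alpha>\<in>A. finite \<alpha> \<and> clause_vars \<alpha> \<subseteq> vars \<Delta>) \<and>
        (\<forall>\<beta>\<in>B. finite \<beta> \<and> clause_vars \<beta> \<subseteq> vars \<Delta>) \<and>
        (let CY = (\<lambda>\<alpha>. insert (Y, True) \<alpha>) ` A;
             CnY = (\<lambda>\<beta>. insert (Y, False) \<beta>) ` B;
             R = resolvents A B
         in R \<subseteq> \<Delta> \<and> card R > card CY + card CnY \<and>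
            \<Sigma> = (\<Delta> - R) \<union> CY \<union> CnY))"

definition is_tree :: "nat set \<Rightarrow> (nat \<times> nat) set \<Rightarrow> bool" where
  "is_tree V E \<longleftrightarrow> finite V \<and> V \<noteq> {} \<and> E \<subseteq> V \<times> V \<and> sym E \<and> irrefl E \<and>
     (\<forall>u\<in>V. \<forall>v\<in>V. (u, v) \<in> E\<^sup>*) \<and>
     card {{u, v} | u v. (u, v) \<in> E} = card V - 1"

definition tree_path :: "(nat \<times> nat) set \<Rightarrow> nat \<Rightarrow> nat \<Rightarrow> nat list \<Rightarrow> bool" where
  "tree_path E u v p \<longleftrightarrow> p \<noteq> [] \<and> hd p = u \<and> last p = v \<and> distinct p \<and>
     (\<forall>i. Suc i < length p \<longrightarrow> (p ! i, p ! Suc i) \<in> E)"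

definition jointree :: "'v cnf \<Rightarrow> nat set \<Rightarrow> (nat \<times> nat) set \<Rightarrow> (nat \<Rightarrow> 'v set) \<Rightarrow> bool" where
  "jointree \<Delta> V E \<chi> \<longleftrightarrow> is_tree V E \<and>
     (\<forall>t\<in>V. \<chi> t \<subseteq> vars \<Delta>) \<and>
     (\<forall>C\<in>\<Delta>. \<exists>t\<in>V. clause_vars C \<subseteq> \<chi> t) \<and>
     (\<forall>x u v p. u \<in> V \<and> v \<in> V \<and> x \<in> \<chi> u \<and> x \<in> \<chi> v \<and> tree_path E u v p
        \<longrightarrow> (\<forall>t\<in>set p. x \<in> \<chi> t))"

definition jt_width :: "nat set \<Rightarrow> (nat \<Rightarrow> 'v set) \<Rightarrow> nat" where
  "jt_width V \<chi> = Max ((\<lambda>t. card (\<chi> t)) ` V) - 1"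

definition primal_treewidth :: "'v cnf \<Rightarrow> nat" where
  "primal_treewidth \<Delta> = (LEAST w. \<exists>V E \<chi>. jointree \<Delta> V E \<chi> \<and> jt_width V \<chi> = w)"

end

theory Submission
  imports Defs
begin

text \<open>A BVA step introduces a single new variable Y, and every new clause is, up to its literal
  on Y, a subclause of some old clause: of a removed resolvent \<open>\<alpha>\<^sub>i \<or> \<beta>\<^sub>j\<close>
  for the clauses containing Y. Hence adding Y to every bag of a jointree of the old CNF gives a
  jointree of the new one on the same tree, whose width is larger by at most one; the path
  condition for Y holds because Y lies in every bag. Iterating k times from an optimal jointree
  gives the bound.\<close>

lemma clause_vars_insert [simp]: "clause_vars (insert l C) = insert (fst l) (clause_vars C)"
  by (simp add: clause_vars_def)

lemma clause_vars_Un [simp]: "clause_vars (C \<union> D) = clause_vars C \<union> clause_vars D"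
  by (auto simp add: clause_vars_def)

lemma bva_step_vars:
  assumes "bva_step \<Delta> \<Sigma>"
  obtains Y where "vars \<Sigma> = insert Y (vars \<Delta>)"
    and "\<forall>C\<in>\<Sigma>. \<exists>D\<in>\<Delta>. clause_vars C \<subseteq> insert Y (clause_vars D)"
proof -
  obtain Y A B where "Y \<notin> vars \<Delta>" and "finite A" and "finite B"
    and A: "\<forall>\<alpha>\<in>A. finite \<alpha> \<and> clause_vars \<alpha> \<subseteq> vars \<Delta>"
    and B: "\<forall>\<beta>\<in>B. finite \<beta> \<and> clause_vars \<beta> \<subseteq> vars \<Delta>"
    and R: "resolvents A B \<subseteq> \<Delta>"
    and card_R: "card (resolvents A B) > card (insert (Y, True) ` A) + card (insert (Y, False) ` B)"
    and \<Sigma>: "\<Sigma> = (\<Delta> - resolvents A B) \<union> insert (Y, True) ` A \<union> insert (Y, False) ` B"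
    using assms unfolding bva_step_def Let_def by blast
  have "resolvents A B \<noteq> {}"
    using card_R by (metis card.empty not_less0)
  then obtain \<alpha>0 \<beta>0 where \<alpha>0: "\<alpha>0 \<in> A" and \<beta>0: "\<beta>0 \<in> B"
    unfolding resolvents_def by auto
  have resolvent: "\<alpha> \<union> \<beta> \<in> \<Delta>" if "\<alpha> \<in> A" "\<beta> \<in> B" for \<alpha> \<beta>
    using R that unfolding resolvents_def by blast
  have "vars \<Sigma> \<subseteq> insert Y (vars \<Delta>)"
    using A B unfolding \<Sigma> vars_def by auto
  moreover have "vars \<Delta> \<subseteq> vars \<Sigma>"
  proof
    fix x assume "x \<in> vars \<Delta>"
    then obtain C where C: "C \<in> \<Delta>" "x \<in> clause_vars C"
      unfolding vars_def by auto
    show "x \<in> vars \<Sigma>"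
    proof (cases "C \<in> resolvents A B")
      case True
      then obtain \<alpha> \<beta> where "C = \<alpha> \<union> \<beta>" "\<alpha> \<in> A" "\<beta> \<in> B"
        unfolding resolvents_def by auto
      then show ?thesis
        using C(2) unfolding \<Sigma> vars_def by auto
    qed (use C in \<open>auto simp: \<Sigma> vars_def\<close>)
  qed
  moreover have "Y \<in> vars \<Sigma>"
    using \<alpha>0 unfolding \<Sigma> vars_def by auto
  ultimately have "vars \<Sigma> = insert Y (vars \<Delta>)"
    by blast
  moreover have "\<forall>C\<in>\<Sigma>. \<exists>D\<in>\<Delta>. clause_vars C \<subseteq> insert Y (clause_vars D)"
  proof
    fix C assume "C \<in> \<Sigma>"
    then consider "C \<in> \<Delta>" | \<alpha> where "\<alpha> \<in> A" "C = insert (Y, True) \<alpha>"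
      | \<beta> where "\<beta> \<in> B" "C = insert (Y, False) \<beta>"
      unfolding \<Sigma> by blast
    then show "\<exists>D\<in>\<Delta>. clause_vars C \<subseteq> insert Y (clause_vars D)"
    proof cases
      case (2 \<alpha>)
      then show ?thesis
        using resolvent[OF _ \<beta>0] by (intro bexI[of _ "\<alpha> \<union> \<beta>0"]) auto
    next
      case (3 \<beta>)
      then show ?thesis
        using resolvent[OF \<alpha>0] by (intro bexI[of _ "\<alpha>0 \<union> \<beta>"]) auto
    qed auto
  qed
  ultimately show thesis
    by (rule that)
qed

lemma jointree_insert_var:
  assumes jt: "jointree \<Delta> V E \<chi>" and vars: "vars \<Sigma> = insert Y (vars \<Delta>)"
    and cover: "\<forall>C\<in>\<Sigma>. \<exists>D\<in>\<Delta>. clause_vars C \<subseteq> insert Y (clause_vars D)"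
  shows "jointree \<Sigma> V E (\<lambda>t. insert Y (\<chi> t))"
  unfolding jointree_def
proof (intro conjI)
  show "is_tree V E" "\<forall>t\<in>V. insert Y (\<chi> t) \<subseteq> vars \<Sigma>"
    using jt vars unfolding jointree_def by auto
  show "\<forall>C\<in>\<Sigma>. \<exists>t\<in>V. clause_vars C \<subseteq> insert Y (\<chi> t)"
  proof
    fix C assume "C \<in> \<Sigma>"
    then obtain D where "D \<in> \<Delta>" "clause_vars C \<subseteq> insert Y (clause_vars D)"
      using cover by blast
    moreover obtain t where "t \<in> V" "clause_vars D \<subseteq> \<chi> t" if "D \<in> \<Delta>"
      using jt unfolding jointree_def by blast
    ultimately show "\<exists>t\<in>V. clause_vars C \<subseteq> insert Y (\<chi> t)"
      by blast
  qed
  show "\<forall>x u v p. u \<in> V \<and> v \<in> V \<and> x \<in> insert Y (\<chi> u) \<and> x \<in> insert Y (\<chi> v) \<and>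
      tree_path E u v p \<longrightarrow> (\<forall>t\<in>set p. x \<in> insert Y (\<chi> t))"
    using jt unfolding jointree_def by (metis insert_iff)
qed

lemma jt_width_insert_le:
  assumes "finite V"
  shows "jt_width V (\<lambda>t. insert Y (\<chi> t)) \<le> jt_width V \<chi> + 1"
proof (cases "V = {}")
  case False
  have "card (insert Y (\<chi> t)) \<le> Suc (card (\<chi> t))" for t
    by (cases "finite (\<chi> t)") (simp_all add: card_insert_if)
  also have "card (\<chi> t) \<le> Max ((\<lambda>t. card (\<chi> t)) ` V)" if "t \<in> V" for t
    using assms that by simp
  finally have "Max ((\<lambda>t. card (insert Y (\<chi> t))) ` V) \<le> Suc (Max ((\<lambda>t. card (\<chi> t)) ` V))"
    using assms False by simp
  then show ?thesis
    unfolding jt_width_def by linarith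
qed (simp add: jt_width_def)

lemma jointree_bva_step:
  assumes "bva_step \<Delta> \<Sigma>" and "jointree \<Delta> V E \<chi>"
  obtains \<chi>' where "jointree \<Sigma> V E \<chi>'" and "jt_width V \<chi>' \<le> jt_width V \<chi> + 1"
proof -
  obtain Y where vars: "vars \<Sigma> = insert Y (vars \<Delta>)"
    and cover: "\<forall>C\<in>\<Sigma>. \<exists>D\<in>\<Delta>. clause_vars C \<subseteq> insert Y (clause_vars D)"
    using bva_step_vars[OF assms(1)] .
  have "finite V"
    using assms(2) unfolding jointree_def is_tree_def by blast
  with jointree_insert_var[OF assms(2) vars cover] show thesis
    by (rule that[OF _ jt_width_insert_le])
qed

lemma jointree_bva_steps:
  assumes "(bva_step ^^ k) \<Delta> \<Sigma>" and "jointree \<Delta> V E \<chi>"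
  shows "\<exists>\<chi>'. jointree \<Sigma> V E \<chi>' \<and> jt_width V \<chi>' \<le> jt_width V \<chi> + k"
  using assms(1)
proof (induction k arbitrary: \<Sigma>)
  case 0
  then show ?case
    using assms(2) by auto
next
  case (Suc k)
  then obtain \<Gamma> where "(bva_step ^^ k) \<Delta> \<Gamma>" and step: "bva_step \<Gamma> \<Sigma>"
    by auto
  with Suc.IH obtain \<chi>' where jt: "jointree \<Gamma> V E \<chi>'"
    and width: "jt_width V \<chi>' \<le> jt_width V \<chi> + k"
    by blast
  obtain \<chi>'' where "jointree \<Sigma> V E \<chi>''" and "jt_width V \<chi>'' \<le> jt_width V \<chi>' + 1"
    using jointree_bva_step[OF step jt] .
  with width show ?case
    by auto
qed

lemma jointree_trivial: "jointree \<Delta> {0} {} (\<lambda>_. vars \<Delta>)"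
  unfolding jointree_def is_tree_def by (auto simp: sym_def irrefl_def vars_def)

lemma primal_treewidth_attained:
  obtains V E \<chi> where "jointree \<Delta> V E \<chi>" and "jt_width V \<chi> = primal_treewidth \<Delta>"
  using LeastI_ex[of "\<lambda>w. \<exists>V E \<chi>. jointree \<Delta> V E \<chi> \<and> jt_width V \<chi> = w"] jointree_trivial
  unfolding primal_treewidth_def by blast

lemma primal_treewidth_le_jt_width:
  assumes "jointree \<Delta> V E \<chi>"
  shows "primal_treewidth \<Delta> \<le> jt_width V \<chi>"
  unfolding primal_treewidth_def using assms by (blast intro: Least_le)

theorem theorem4:
  fixes \<Delta> \<Sigma> :: "'v cnf" and k w :: nat
  assumes "cnf \<Delta>"
    and "primal_treewidth \<Delta> = w"
    and "(bva_step ^^ k) \<Delta> \<Sigma>"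
  shows "primal_treewidth \<Sigma> \<le> w + k"
proof -
  obtain V E \<chi> where "jointree \<Delta> V E \<chi>" and "jt_width V \<chi> = w"
    using primal_treewidth_attained assms(2) by metis
  with assms(3) obtain \<chi>' where "jointree \<Sigma> V E \<chi>'" and "jt_width V \<chi>' \<le> w + k"
    using jointree_bva_steps by metis
  then show ?thesis
    using primal_treewidth_le_jt_width order_trans by blast
qed

end
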